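(* Let $Z$ be a random variable with the standard Gumbel distribution $\mathcal{G}(0,1)$, and for $n\ge 1$ let $Z_n = \frac{T_n}{n}-\log n$, where $T_n$ is the coupon collector's completion time for $n$ coupons. Then there exists a constant $C>0$ such that for all $n\ge 2$, \[ \operatorname{dist}_{\mathrm{Lip}_{[2]}(\mathbb{R})}\big(\operatorname{law}(Z_n),\operatorname{law}(Z)\big)\le C\,\frac{\log n}{n}. \]
   Context: The standard Gumbel distribution $\mathcal{G}(0,1)$ has density $x\mapsto e^{-(x+e^{-x})}$ and cumulative distribution function $x\mapsto \exp(-\exp(-x))$ on $\mathbb{R}$. Coupon collector: let $(X_k)_{k\ge1}$ be i.i.d. uniform on $I_n=\{1,\dots,n\}$ and $T_n=\inf\{k\ge1:\{X_1,\dots,X_k\}=I_n\}$. $\mathrm{Lip}$ denotes the Lipschitz functions $\mathbb{R}\to\mathbb{R}$ with $\|f\|_{\mathrm{Lip}}=\sup_{t\ne s}|f(t)-f(s)|/|t-s|$; $\mathrm{Lip}_{[2]}(\mathbb{R})$ is the set of $f\in\mathrm{Lip}$ whose derivative $f'$ admits a Lipschitz representative, with semi-norm $\|f\|_{\mathrm{Lip}_{[2]}(\mathbb{R})}=\max(\|f\|_{\mathrm{Lip}},\|f'\|_{\mathrm{Lip}})$ (functions need not be bounded). For probability laws $\nu,\mu$ on $\mathbb{R}$ with finite first moment, $\operatorname{dist}_{\mathrm{Lip}_{[2]}(\mathbb{R})}(\nu,\mu)=\sup\{\int f\,d\nu-\int f\,d\mu : \|f\|_{\mathrm{Lip}_{[2]}(\mathbb{R})}=1\}$.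 *)

theory Defs
  imports "HOL-Probability.Probability"
begin

definition gumbel_density :: "real \<Rightarrow> real" where
  "gumbel_density x = exp (- (x + exp (- x)))"

definition gumbel_law :: "real measure" where
  "gumbel_law = density lborel (\<lambda>x. ennreal (gumbel_density x))"

text \<open>Coupon collector: X_1, X_2, ... i.i.d. uniform on {1..n}, realised as the
  canonical i.i.d. sequence space (X_k = w !! (k-1)).\<close>
definition coupon_space :: "nat \<Rightarrow> nat stream measure" where
  "coupon_space n = stream_space (measure_pmf (pmf_of_set {1..n}))"

definition coupon_time :: "nat \<Rightarrow> nat stream \<Rightarrow> nat" where
  "coupon_time n w = (LEAST k. k \<ge> 1 \<and> set (stake k w) = {1..n})"

definition Zn_law :: "nat \<Rightarrow> real measure" where
  "Zn_law n = distr (coupon_space n) borel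
     (\<lambda>w. real (coupon_time n w) / real n - ln (real n))"

definition lip_seminorm :: "(real \<Rightarrow> real) \<Rightarrow> real" where
  "lip_seminorm f = Sup {\<bar>f t - f s\<bar> / \<bar>t - s\<bar> | t s. t \<noteq> s}"

text \<open>Lip_[2](R): f Lipschitz, and f' has a Lipschitz representative
  (equivalently f is differentiable everywhere with Lipschitz derivative).\<close>
definition Lip2 :: "(real \<Rightarrow> real) set" where
  "Lip2 = {f. (\<exists>L. lipschitz_on L UNIV f) \<and>
             (\<exists>g. (\<forall>x. (f has_real_derivative g x) (at x)) \<and> (\<exists>L. lipschitz_on L UNIV g))}"

definition Lip2_norm :: "(real \<Rightarrow> real) \<Rightarrow> real" where
  "Lip2_norm f = max (lip_seminorm f) (lip_seminorm (deriv f))"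

definition dist_Lip2 :: "real measure \<Rightarrow> real measure \<Rightarrow> ereal" where
  "dist_Lip2 \<nu> \<mu> = (SUP f \<in> {f \<in> Lip2. Lip2_norm f = 1}.
       ereal (integral\<^sup>L \<nu> f - integral\<^sup>L \<mu> f))"

end

(*
  Poissonization. Let Gamma_j be a sum of j independent exponential variables of rate n,
  independent of the coupons. Then Gamma_(T_n) is the time at which n independent rate-1
  Poisson clocks have all rung, i.e. the maximum M_n of n independent standard exponentials,
  whose law is the image of the Gumbel law G under an explicit increasing map psi_n with
  |psi_n x - log n - x| <= exp (- x) / n. Since E exp (- G) = 1, replacing M_n - log n by G
  costs at most 1/n against a 1-Lipschitz test function f. Conditionally on T_n = j, Gamma_j
  has mean j/n and variance j/n^2, so a second-order Taylor bound for f (whose derivative is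
  1-Lipschitz) compares E f (T_n/n - log n) with E f (M_n - log n) up to
  E T_n / (2 n^2) <= (log n + 3) / (2 n). That Gamma_(T_n) has the law of M_n is checked
  analytically: inclusion-exclusion gives P (T_n = j + 1), and summing it against the Erlang
  densities reproduces the density of M_n.
*)
theory Submission
  imports Defs "HOL-Real_Asymp.Real_Asymp"
begin

section \<open>Integrals from antiderivatives and second-order Taylor bounds\<close>

lemma nn_integral_FTC_atMost:
  fixes f F :: "real \<Rightarrow> real"
  assumes f_borel: "f \<in> borel_measurable borel"
    and der: "\<And>x. x \<le> b \<Longrightarrow> (F has_real_derivative f x) (at x)"
    and nonneg: "\<And>x. x \<le> b \<Longrightarrow> 0 \<le> f x"
    and lim: "(F \<longlongrightarrow> A) at_bot"
  shows "(\<integral>\<^sup>+x. ennreal (f x) * indicator {..b} x \<partial>lborel) = ennreal (F b - A)"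
proof -
  have "(\<integral>\<^sup>+x. ennreal (f x) * indicator {..b} x \<partial>lborel)
      = (\<integral>\<^sup>+x. ennreal (f x) * indicator {..b} x \<partial>distr lborel borel uminus)"
    by (simp add: lborel_distr_uminus)
  also have "\<dots> = (\<integral>\<^sup>+y. ennreal (f (- y)) * indicator {-b..} y \<partial>lborel)"
    using f_borel by (subst nn_integral_distr) (auto intro!: nn_integral_cong simp: indicator_def)
  also have "\<dots> = ennreal (- A - (- F (- (- b))))"
  proof (rule nn_integral_FTC_atLeast)
    show "((\<lambda>y. - F (- y)) has_real_derivative f (- y)) (at y)" if "- b \<le> y" for y
    proof -
      have "((\<lambda>z. F (- z)) has_real_derivative f (- y) * (- 1)) (at y)"
        by (rule DERIV_chain2[OF der]) (use that in \<open>auto intro!: derivative_eq_intros\<close>)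
      then show ?thesis
        using DERIV_minus by fastforce
    qed
    show "((\<lambda>y. - F (- y)) \<longlongrightarrow> - A) at_top"
      by (intro tendsto_minus filterlim_compose[OF lim] filterlim_uminus_at_bot_at_top)
  qed (use f_borel nonneg in auto)
  finally show ?thesis by simp
qed

lemma nn_integral_FTC_UNIV:
  fixes f F :: "real \<Rightarrow> real"
  assumes f_borel: "f \<in> borel_measurable borel"
    and der: "\<And>x. (F has_real_derivative f x) (at x)"
    and nonneg: "\<And>x. 0 \<le> f x"
    and lim_bot: "(F \<longlongrightarrow> A) at_bot" and lim_top: "(F \<longlongrightarrow> B) at_top"
  shows "(\<integral>\<^sup>+x. ennreal (f x) \<partial>lborel) = ennreal (B - A)"
proof -
  have mono: "x \<le> y \<Longrightarrow> F x \<le> F y" for x y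
    using der nonneg by (intro DERIV_nonneg_imp_nondecreasing[of x y F]) auto
  have "A \<le> F 0"
    by (rule tendsto_upperbound[OF lim_bot]) (auto simp: eventually_at_bot_linorder intro!: exI[of _ 0] mono)
  moreover have "F 0 \<le> B"
    by (rule tendsto_lowerbound[OF lim_top]) (auto simp: eventually_at_top_linorder intro!: exI[of _ 0] mono)
  moreover have "(\<integral>\<^sup>+x. ennreal (f x) \<partial>lborel) =
      (\<integral>\<^sup>+x. ennreal (f x) * indicator {..0} x \<partial>lborel) + (\<integral>\<^sup>+x. ennreal (f x) * indicator {0..} x \<partial>lborel)"
  proof -
    have "AE x in lborel. ennreal (f x) = ennreal (f x) * indicator {..0} x + ennreal (f x) * indicator {0..} x"
      using AE_lborel_singleton[of 0] by eventually_elim (auto simp: indicator_def)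
    then show ?thesis
      using f_borel by (subst nn_integral_add[symmetric]) (auto intro!: nn_integral_cong_AE)
  qed
  ultimately show ?thesis
    by (simp add: nn_integral_FTC_atMost[OF f_borel der nonneg lim_bot]
        nn_integral_FTC_atLeast[OF f_borel der nonneg lim_top] flip: ennreal_plus)
qed

lemma abs_le_abs_add_lipschitz:
  fixes f :: "real \<Rightarrow> real"
  assumes "1-lipschitz_on UNIV f"
  shows "\<bar>f x\<bar> \<le> \<bar>f c\<bar> + \<bar>x - c\<bar>"
  using lipschitz_onD[OF assms, of x c] by (simp add: dist_real_def)

lemma borel_measurable_lipschitz_on_UNIV:
  fixes f :: "real \<Rightarrow> real"
  assumes "C-lipschitz_on UNIV f"
  shows "f \<in> borel_measurable borel"
  using lipschitz_on_continuous_on[OF assms] by (rule borel_measurable_continuous_onI)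

lemma lipschitz_on_UNIV_shift:
  fixes f :: "real \<Rightarrow> real"
  assumes "C-lipschitz_on UNIV f"
  shows "C-lipschitz_on UNIV (\<lambda>x. f (x - c))"
proof (rule lipschitz_onI)
  show "dist (f (x - c)) (f (y - c)) \<le> C * dist x y" for x y
    using lipschitz_onD[OF assms, of "x - c" "y - c"] by (simp add: dist_real_def)
qed (rule lipschitz_on_nonneg[OF assms])

lemma DERIV_nonneg_nonpos_imp_le:
  fixes u u' :: "real \<Rightarrow> real"
  assumes der: "\<And>t. (u has_real_derivative u' t) (at t)"
    and left: "\<And>t. t \<le> x \<Longrightarrow> 0 \<le> u' t" and right: "\<And>t. x \<le> t \<Longrightarrow> u' t \<le> 0"
  shows "u y \<le> u x"
proof (cases "x \<le> y")
  case True
  show ?thesis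
  proof (rule DERIV_nonpos_imp_nonincreasing[OF True])
    show "\<exists>d. (u has_real_derivative d) (at t) \<and> d \<le> 0" if "x \<le> t" for t
      using der right that by blast
  qed
next
  case False
  then have "y \<le> x"
    by simp
  then show ?thesis
  proof (rule DERIV_nonneg_imp_nondecreasing)
    show "\<exists>d. (u has_real_derivative d) (at t) \<and> 0 \<le> d" if "t \<le> x" for t
      using der left that by blast
  qed
qed

lemma taylor_lipschitz_deriv:
  fixes f f' :: "real \<Rightarrow> real"
  assumes der: "\<And>x. (f has_real_derivative f' x) (at x)" and L: "L-lipschitz_on UNIV f'"
  shows "\<bar>f y - f x - f' x * (y - x)\<bar> \<le> L * (y - x)\<^sup>2 / 2"
proof -
  have "\<sigma> * (f y - f x - f' x * (y - x)) \<le> L * (y - x)\<^sup>2 / 2" if \<sigma>: "\<bar>\<sigma>\<bar> = 1" for \<sigma>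
  proof -
    define u where "u t = \<sigma> * (f t - f x - f' x * (t - x)) - L * (t - x)\<^sup>2 / 2" for t
    have "u y \<le> u x"
    proof (rule DERIV_nonneg_nonpos_imp_le[where u = u and x = x])
      show "(u has_real_derivative \<sigma> * (f' t - f' x) - L * (t - x)) (at t)" for t
        unfolding u_def by (auto intro!: derivative_eq_intros der simp: field_simps)
      have bound: "\<bar>\<sigma> * (f' t - f' x)\<bar> \<le> L * \<bar>t - x\<bar>" for t
        using lipschitz_onD[OF L, of t x] \<sigma> by (simp add: abs_mult dist_real_def)
      show "0 \<le> \<sigma> * (f' t - f' x) - L * (t - x)" if "t \<le> x" for t
      proof -
        have "L * \<bar>t - x\<bar> = - (L * (t - x))"
          using that by (simp add: abs_of_nonpos algebra_simps)
        then show ?thesis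
          using bound[of t] by (simp only: abs_le_iff) linarith
      qed
      show "\<sigma> * (f' t - f' x) - L * (t - x) \<le> 0" if "x \<le> t" for t
        using bound[of t] that by (simp only: abs_le_iff abs_of_nonneg diff_ge_0_iff_ge) linarith
    qed
    then show ?thesis
      by (simp add: u_def)
  qed
  from this[of 1] this[of "- 1"] show ?thesis
    unfolding abs_le_iff by simp
qed

lemma (in prob_space) expectation_lipschitz_deriv_approx:
  fixes f f' :: "real \<Rightarrow> real" and X :: "'a \<Rightarrow> real"
  assumes der: "\<And>x. (f has_real_derivative f' x) (at x)" and L: "L-lipschitz_on UNIV f'"
    and X[measurable]: "random_variable borel X"
    and int_X: "integrable M X" and int_X2: "integrable M (\<lambda>\<omega>. (X \<omega>)\<^sup>2)"
  shows "integrable M (\<lambda>\<omega>. f (X \<omega>))"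
    and "\<bar>expectation (\<lambda>\<omega>. f (X \<omega>)) - f (expectation X)\<bar> \<le> L * variance X / 2"
proof -
  define \<mu> where "\<mu> = expectation X"
  define h where "h \<omega> = f (X \<omega>) - f \<mu> - f' \<mu> * (X \<omega> - \<mu>)" for \<omega>
  have f_borel[measurable]: "f \<in> borel_measurable borel"
    using DERIV_isCont[OF der] by (intro borel_measurable_continuous_onI continuous_at_imp_continuous_on) auto
  have h_le: "\<bar>h \<omega>\<bar> \<le> L * (X \<omega> - \<mu>)\<^sup>2 / 2" for \<omega>
    unfolding h_def by (rule taylor_lipschitz_deriv[OF der L])
  have int_sq: "integrable M (\<lambda>\<omega>. L * (X \<omega> - \<mu>)\<^sup>2 / 2)"
    using int_X int_X2 by (simp add: power2_diff)
  have int_h: "integrable M h"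
  proof (rule Bochner_Integration.integrable_bound[OF int_sq])
    show "h \<in> borel_measurable M"
      unfolding h_def by measurable
    show "AE \<omega> in M. norm (h \<omega>) \<le> norm (L * (X \<omega> - \<mu>)\<^sup>2 / 2)"
      using h_le lipschitz_on_nonneg[OF L] by (intro AE_I2) simp
  qed
  have f_X: "f (X \<omega>) = h \<omega> + f \<mu> + f' \<mu> * (X \<omega> - \<mu>)" for \<omega>
    by (simp add: h_def)
  show int_fX: "integrable M (\<lambda>\<omega>. f (X \<omega>))"
    unfolding f_X using int_h int_X by simp
  have "expectation (\<lambda>\<omega>. f (X \<omega>)) - f \<mu> = expectation h"
    unfolding f_X using int_h int_X by (simp add: \<mu>_def prob_space)
  also have "\<bar>expectation h\<bar> \<le> expectation (\<lambda>\<omega>. L * (X \<omega> - \<mu>)\<^sup>2 / 2)"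
    using h_le by (intro order_trans[OF integral_abs_bound] integral_mono integrable_abs int_h int_sq)
  also have "\<dots> = L * variance X / 2"
    by (simp add: \<mu>_def)
  finally show "\<bar>expectation (\<lambda>\<omega>. f (X \<omega>)) - f (expectation X)\<bar> \<le> L * variance X / 2"
    by (simp add: \<mu>_def)
qed

section \<open>Words over a finite alphabet and uniform i.i.d. streams\<close>

lemma sum_Pow_alternating_deriv:
  fixes x :: real
  assumes A: "finite A"
  shows "(\<Sum>S\<in>Pow A. (- 1) ^ (card A - card S) * (real (card A) - real (card S)) * x ^ card S)
    = - real (card A) * (x - 1) ^ (card A - 1)"
proof -
  have binomial: "(\<Sum>S\<in>Pow A. x ^ card S * y ^ (card A - card S)) = (x + y) ^ card A" for y
    using prod_add[OF A, of "\<lambda>_. x" "\<lambda>_. y"] A by (simp add: card_Diff_subset finite_subset)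
  have D1: "((\<lambda>y. \<Sum>S\<in>Pow A. x ^ card S * y ^ (card A - card S)) has_real_derivative
      (\<Sum>S\<in>Pow A. x ^ card S * (real (card A - card S) * y ^ (card A - card S - 1)))) (at y)" for y
    by (auto intro!: derivative_eq_intros sum.cong simp: mult_ac)
  have D2: "((\<lambda>y. \<Sum>S\<in>Pow A. x ^ card S * y ^ (card A - card S)) has_real_derivative
      real (card A) * (x + y) ^ (card A - 1)) (at y)" for y
    unfolding binomial by (auto intro!: derivative_eq_intros)
  have "(\<Sum>S\<in>Pow A. (- 1) ^ (card A - card S) * (real (card A) - real (card S)) * x ^ card S)
      = - (\<Sum>S\<in>Pow A. x ^ card S * (real (card A - card S) * (- 1) ^ (card A - card S - 1)))"
    unfolding sum_negf[symmetric]
  proof (rule sum.cong)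
    show "(- 1) ^ (card A - card S) * (real (card A) - real (card S)) * x ^ card S
      = - (x ^ card S * (real (card A - card S) * (- 1) ^ (card A - card S - 1)))" if "S \<in> Pow A" for S
      using that A card_mono[of A S] by (cases "card A - card S") (auto simp: of_nat_diff)
  qed simp
  also have "\<dots> = - real (card A) * (x - 1) ^ (card A - 1)"
    using DERIV_unique[OF D1[of "- 1"] D2[of "- 1"]] by simp
  finally show ?thesis .
qed

lemma card_lists_set_eq_inclusion_exclusion:
  assumes A: "finite A"
  shows "real (card {xs. length xs = m \<and> set xs = A})
    = (\<Sum>T\<in>Pow A. (- 1) ^ (card A - card T) * real (card T) ^ m)"
proof -
  define f where "f S = real (card {xs. length xs = m \<and> set xs = S})" for S :: "'a set"
  have "f S = (\<Sum>T\<in>Pow S. (- 1) ^ (card S - card T) * real (card T) ^ m)" if "finite S" for S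
  proof (rule inclusion_exclusion_mobius[OF _ that])
    fix S :: "'a set"
    assume S: "finite S"
    have fin: "finite {xs. length xs = m \<and> set xs = T}" if "T \<in> Pow S" for T
      using that by (intro finite_subset[OF _ finite_lists_length_eq[OF S, of m]]) auto
    have "card S ^ m = card {xs. set xs \<subseteq> S \<and> length xs = m}"
      by (rule card_lists_length_eq[OF S, symmetric])
    also have "{xs. set xs \<subseteq> S \<and> length xs = m} = (\<Union>T\<in>Pow S. {xs. length xs = m \<and> set xs = T})"
      by auto
    also have "card \<dots> = (\<Sum>T\<in>Pow S. card {xs. length xs = m \<and> set xs = T})"
      by (rule card_UN_disjoint) (use S fin in auto)
    finally have "card S ^ m = (\<Sum>T\<in>Pow S. card {xs. length xs = m \<and> set xs = T})" .
    from arg_cong[OF this, of real] show "real (card S) ^ m = sum f (Pow S)"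
      by (simp add: f_def)
  qed
  then show ?thesis
    using A by (simp add: f_def)
qed

lemma card_lists_Suc_length:
  assumes A: "finite A"
  shows "card {ys. length ys = Suc m \<and> set ys \<subseteq> A \<and> Q ys}
    = (\<Sum>t\<in>A. card {xs. length xs = m \<and> set xs \<subseteq> A \<and> Q (t # xs)})"
proof -
  have fin: "finite {xs. length xs = m \<and> set xs \<subseteq> A \<and> Q (t # xs)}" for t
    by (rule finite_subset[OF _ finite_lists_length_eq[OF A, of m]]) auto
  have eq: "{ys. length ys = Suc m \<and> set ys \<subseteq> A \<and> Q ys}
      = (\<Union>t\<in>A. (#) t ` {xs. length xs = m \<and> set xs \<subseteq> A \<and> Q (t # xs)})"
    by (auto simp: length_Suc_conv)
  show ?thesis
    unfolding eq using A fin by (subst card_UN_disjoint) (auto simp: card_image)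
qed

lemma measurable_stake_pmf[measurable]:
  fixes p :: "'a::countable pmf"
  shows "stake m \<in> measurable (stream_space (measure_pmf p)) (count_space UNIV)"
proof -
  have "sets (stream_space (measure_pmf p)) = sets (stream_space (count_space UNIV))"
    by (rule sets_stream_space_cong) simp
  then show ?thesis
    by (subst measurable_cong_sets[OF _ refl]) (auto intro: measurable_stake)
qed

lemma measure_stream_space_pmf_of_set_stake:
  fixes A :: "'a::countable set"
  assumes A: "finite A" "A \<noteq> {}"
  defines "S \<equiv> stream_space (measure_pmf (pmf_of_set A))"
  shows "measure S {w \<in> space S. Q (stake m w)}
    = real (card {xs. length xs = m \<and> set xs \<subseteq> A \<and> Q xs}) / real (card A) ^ m"
proof (induction m arbitrary: Q)
  case 0
  interpret prob_space S
    unfolding S_def by (rule prob_space.prob_space_stream_space[OF prob_space_measure_pmf])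
  have "{xs. length xs = 0 \<and> set xs \<subseteq> A \<and> Q xs} = (if Q [] then {[]} else {})"
    by auto
  then show ?case
    by (simp add: prob_space)
next
  case (Suc m)
  define c where "c t = real (card {xs. length xs = m \<and> set xs \<subseteq> A \<and> Q (t # xs)})" for t
  have cA: "0 < real (card A)"
    using A by (simp add: card_gt_0_iff)
  have "ennreal (measure S {w \<in> space S. Q (stake (Suc m) w)})
      = (\<integral>\<^sup>+t. ennreal (measure S {w \<in> space S. Q (stake (Suc m) (t ## w))}) \<partial>measure_pmf (pmf_of_set A))"
    unfolding S_def by (rule prob_space.prob_stream_space[OF prob_space_measure_pmf]) measurable
  also have "\<dots> = (\<Sum>t\<in>A. ennreal (c t / real (card A) ^ m)) / card A"
    using Suc.IH[of "\<lambda>xs. Q (_ # xs)"] A by (simp add: c_def nn_integral_pmf_of_set)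
  also have "\<dots> = ennreal ((\<Sum>t\<in>A. c t) / real (card A) ^ m) / ennreal (real (card A))"
    by (subst sum_ennreal) (auto simp: c_def sum_divide_distrib[symmetric] ennreal_of_nat_eq_real_of_nat)
  also have "\<dots> = ennreal ((\<Sum>t\<in>A. c t) / real (card A) ^ m / real (card A))"
    using cA by (intro divide_ennreal) (auto simp: c_def intro!: sum_nonneg divide_nonneg_nonneg)
  also have "(\<Sum>t\<in>A. c t) = real (card {ys. length ys = Suc m \<and> set ys \<subseteq> A \<and> Q ys})"
    unfolding c_def card_lists_Suc_length[OF A(1)] by simp
  finally show ?case
    using cA by (subst (asm) ennreal_inj) (auto simp: field_simps)
qed

section \<open>Erlang laws\<close>

lemma distributed_erlang_density:
  "distributed (density lborel (erlang_density k l)) lborel (\<lambda>x. x) (erlang_density k l)"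
  by (simp add: distributed_def distr_id2)

lemma erlang_taylor_approx:
  fixes f f' :: "real \<Rightarrow> real"
  assumes l: "0 < l"
    and der: "\<And>x. (f has_real_derivative f' x) (at x)" and L: "L-lipschitz_on UNIV f'"
  shows "\<bar>(\<integral>s. erlang_density k l s * f s \<partial>lborel) - f (real (Suc k) / l)\<bar> \<le> L * real (Suc k) / (2 * l\<^sup>2)"
proof -
  let ?E = "density lborel (erlang_density k l)"
  interpret E: prob_space ?E
    using l by (rule prob_space_erlang_density)
  note erl = l distributed_erlang_density
  have int_X: "integrable ?E (\<lambda>x. x)" and int_X2: "integrable ?E (\<lambda>x. x\<^sup>2)"
    using E.erlang_ith_moment_integrable[OF erl, of 1] E.erlang_ith_moment_integrable[OF erl, of 2]
    by simp_all
  have X: "(\<lambda>x. x) \<in> borel_measurable ?E"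
    by simp
  have "E.expectation (\<lambda>x. x) = real (Suc k) / l"
    using E.erlang_ith_moment[OF erl, of 1] by (simp add: fact_Suc del: of_nat_Suc)
  moreover have "E.variance (\<lambda>x. x) = real (Suc k) / l\<^sup>2"
    using E.erlang_distributed_variance[OF erl] by simp
  moreover have "E.expectation f = (\<integral>s. erlang_density k l s * f s \<partial>lborel)"
    using l E.expectation_lipschitz_deriv_approx(1)[OF der L X int_X int_X2]
    by (subst integral_density) (auto dest: borel_measurable_integrable)
  ultimately show ?thesis
    using E.expectation_lipschitz_deriv_approx(2)[OF der L X int_X int_X2] by simp
qed

lemma erlang_lipschitz_integrable:
  fixes g :: "real \<Rightarrow> real"
  assumes l: "0 < l" and g: "1-lipschitz_on UNIV g"
  shows "integrable lborel (\<lambda>s. erlang_density k l s * g s)"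
    and "(\<integral>s. erlang_density k l s * \<bar>g s\<bar> \<partial>lborel) \<le> \<bar>g 0\<bar> + real (Suc k) / l"
proof -
  let ?E = "density lborel (erlang_density k l)"
  interpret E: prob_space ?E
    using l by (rule prob_space_erlang_density)
  note erl = l distributed_erlang_density
  note g_borel[measurable] = borel_measurable_lipschitz_on_UNIV[OF g]
  have int_X: "integrable ?E (\<lambda>x. x)"
    using E.erlang_ith_moment_integrable[OF erl, of 1] by simp
  have int_bound: "integrable ?E (\<lambda>x. \<bar>g 0\<bar> + x)"
    using int_X by simp
  have AE_g_le: "AE x in ?E. \<bar>g x\<bar> \<le> \<bar>g 0\<bar> + x"
  proof -
    have "AE x in ?E. 0 \<le> x"
      using l by (subst AE_density) (auto simp: erlang_density_def)
    then show ?thesis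
    proof eventually_elim
      case (elim x)
      then show ?case
        using abs_le_abs_add_lipschitz[OF g, of x 0] by simp
    qed
  qed
  have int_g: "integrable ?E g"
    by (rule Bochner_Integration.integrable_bound[OF int_bound]) (use AE_g_le in \<open>auto elim: eventually_mono\<close>)
  then show "integrable lborel (\<lambda>s. erlang_density k l s * g s)"
    using l by (simp add: integrable_density)
  have "(\<integral>s. erlang_density k l s * \<bar>g s\<bar> \<partial>lborel) = E.expectation (\<lambda>x. \<bar>g x\<bar>)"
    using l by (simp add: integral_density)
  also have "\<dots> \<le> E.expectation (\<lambda>x. \<bar>g 0\<bar> + x)"
    using AE_g_le by (intro integral_mono_AE integrable_abs int_g int_bound)
  also have "\<dots> = \<bar>g 0\<bar> + real (Suc k) / l"
    using int_X E.erlang_ith_moment[OF erl, of 1] E.prob_space by (simp add: fact_Suc del: of_nat_Suc)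
  finally show "(\<integral>s. erlang_density k l s * \<bar>g s\<bar> \<partial>lborel) \<le> \<bar>g 0\<bar> + real (Suc k) / l" .
qed

section \<open>The Gumbel law\<close>

lemma gumbel_density_nonneg: "0 \<le> gumbel_density x"
  by (simp add: gumbel_density_def)

lemma borel_measurable_gumbel_density[measurable]: "gumbel_density \<in> borel_measurable borel"
  unfolding gumbel_density_def by measurable

lemma gumbel_density_eq: "gumbel_density x = exp (- x) * exp (- exp (- x))"
  by (simp add: gumbel_density_def flip: exp_add)

lemma has_real_derivative_gumbel_cdf:
  "((\<lambda>x. exp (- exp (- x))) has_real_derivative gumbel_density x) (at x)"
  unfolding gumbel_density_eq by (auto intro!: derivative_eq_intros)

lemma gumbel_cdf_at_bot: "((\<lambda>x::real. exp (- exp (- x))) \<longlongrightarrow> 0) at_bot"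
  by real_asymp

lemma gumbel_cdf_at_top: "((\<lambda>x::real. exp (- exp (- x))) \<longlongrightarrow> 1) at_top"
  by real_asymp

lemma sets_gumbel_law[simp, measurable_cong]: "sets gumbel_law = sets borel"
  by (simp add: gumbel_law_def)

lemma space_gumbel_law[simp]: "space gumbel_law = UNIV"
  by (simp add: gumbel_law_def)

lemma nn_integral_gumbel_law:
  "(\<integral>\<^sup>+x. g x \<partial>gumbel_law) = (\<integral>\<^sup>+x. ennreal (gumbel_density x) * g x \<partial>lborel)"
  if "g \<in> borel_measurable borel"
  using that unfolding gumbel_law_def by (simp add: nn_integral_density)

lemma emeasure_gumbel_law_atMost: "emeasure gumbel_law {..b} = ennreal (exp (- exp (- b)))"
  unfolding gumbel_law_def
  by (simp add: emeasure_density nn_integral_FTC_atMost[OF _ has_real_derivative_gumbel_cdf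
        gumbel_density_nonneg gumbel_cdf_at_bot])

lemma prob_space_gumbel_law: "prob_space gumbel_law"
proof
  show "emeasure gumbel_law (space gumbel_law) = 1"
    unfolding gumbel_law_def
    by (simp add: emeasure_density nn_integral_FTC_UNIV[OF _ has_real_derivative_gumbel_cdf
          gumbel_density_nonneg gumbel_cdf_at_bot gumbel_cdf_at_top])
qed

interpretation gumbel: prob_space gumbel_law
  by (rule prob_space_gumbel_law)

text \<open>If G has law gumbel_law then exp (- G) is a standard exponential variable.\<close>
lemma nn_integral_gumbel_exp_neg: "(\<integral>\<^sup>+x. ennreal (exp (- x)) \<partial>gumbel_law) = 1"
proof -
  have "(\<integral>\<^sup>+x. ennreal (exp (- x)) \<partial>gumbel_law) = (\<integral>\<^sup>+x. ennreal (gumbel_density x * exp (- x)) \<partial>lborel)"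
    by (simp add: nn_integral_gumbel_law gumbel_density_nonneg ennreal_mult')
  also have "\<dots> = ennreal (1 - 0)"
  proof (rule nn_integral_FTC_UNIV[where F = "\<lambda>x. (exp (- x) + 1) * exp (- exp (- x))"])
    show "((\<lambda>x. (exp (- x) + 1) * exp (- exp (- x))) has_real_derivative gumbel_density x * exp (- x)) (at x)" for x
      unfolding gumbel_density_eq by (auto intro!: derivative_eq_intros simp: algebra_simps)
  qed (real_asymp | simp add: gumbel_density_nonneg)+
  finally show ?thesis by simp
qed

lemma integrable_gumbel_exp_neg: "integrable gumbel_law (\<lambda>x. exp (- x))"
  by (rule integrableI_bounded) (use nn_integral_gumbel_exp_neg in auto)

lemma integral_gumbel_exp_neg: "(\<integral>x. exp (- x) \<partial>gumbel_law) = 1"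
  using nn_integral_gumbel_exp_neg integrable_gumbel_exp_neg
  by (subst (asm) nn_integral_eq_integral) (auto simp: ennreal_eq_1)

lemma nn_integral_gumbel_abs_le: "(\<integral>\<^sup>+x. ennreal \<bar>x\<bar> \<partial>gumbel_law) \<le> 2"
proof -
  have "ennreal (gumbel_density x * \<bar>x\<bar>)
      \<le> ennreal (gumbel_density x * exp (- x)) + ennreal (x ^ 1 * exp (- x)) * indicator {0..} x" for x :: real
  proof (cases "x < 0")
    case True
    then have "gumbel_density x * \<bar>x\<bar> \<le> gumbel_density x * exp (- x)"
      using exp_ge_add_one_self[of "- x"] by (intro mult_left_mono) (auto simp: gumbel_density_nonneg)
    then show ?thesis
      using True by (auto intro: ennreal_leI)
  next
    case False
    then have "gumbel_density x * \<bar>x\<bar> \<le> x ^ 1 * exp (- x)"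
      by (auto simp: gumbel_density_eq mult.commute intro!: mult_left_mono)
    then show ?thesis
      using False by (auto intro: ennreal_leI add_increasing)
  qed
  then have "(\<integral>\<^sup>+x. ennreal \<bar>x\<bar> \<partial>gumbel_law) \<le>
      (\<integral>\<^sup>+x. ennreal (gumbel_density x * exp (- x)) \<partial>lborel)
      + (\<integral>\<^sup>+x. ennreal (x ^ 1 * exp (- x)) * indicator {0..} x \<partial>lborel)"
    by (subst nn_integral_add[symmetric])
      (auto simp: nn_integral_gumbel_law gumbel_density_nonneg intro!: nn_integral_mono simp flip: ennreal_mult')
  also have "(\<integral>\<^sup>+x. ennreal (gumbel_density x * exp (- x)) \<partial>lborel) = 1"
    using nn_integral_gumbel_exp_neg by (simp add: nn_integral_gumbel_law gumbel_density_nonneg ennreal_mult')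
  also have "(\<integral>\<^sup>+x. ennreal (x ^ 1 * exp (- x)) * indicator {0..} x \<partial>lborel) = 1"
    using nn_intergal_power_times_exp_Ici[of 1] by simp
  finally show ?thesis
    by (simp add: one_add_one)
qed

lemma integrable_gumbel_abs: "integrable gumbel_law (\<lambda>x. \<bar>x\<bar>)"
proof (rule integrableI_bounded)
  show "(\<integral>\<^sup>+x. ennreal (norm \<bar>x\<bar>) \<partial>gumbel_law) < \<infinity>"
    using nn_integral_gumbel_abs_le by (simp add: le_less_trans)
qed simp

lemma integrable_gumbel_lipschitz:
  fixes g :: "real \<Rightarrow> real"
  assumes g: "1-lipschitz_on UNIV g"
  shows "integrable gumbel_law g"
proof (rule Bochner_Integration.integrable_bound)
  show "integrable gumbel_law (\<lambda>x. \<bar>g 0\<bar> + \<bar>x\<bar>)"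
    by (intro Bochner_Integration.integrable_add integrable_gumbel_abs gumbel.integrable_const)
  show "AE x in gumbel_law. norm (g x) \<le> norm (\<bar>g 0\<bar> + \<bar>x\<bar>)"
    using abs_le_abs_add_lipschitz[OF g, of _ 0] by auto
qed (use borel_measurable_lipschitz_on_UNIV[OF g] in simp)

section \<open>The maximum of n standard exponential variables\<close>

definition max_exp_density :: "nat \<Rightarrow> real \<Rightarrow> real" where
  "max_exp_density n s = (if s < 0 then 0 else real n * exp (- s) * (1 - exp (- s)) ^ (n - 1))"

definition max_exp_cdf :: "nat \<Rightarrow> real \<Rightarrow> real" where
  "max_exp_cdf n t = (if t \<le> 0 then 0 else (1 - exp (- t)) ^ n)"

text \<open>The quantile transform pushing the Gumbel law forward to the law of the maximum of n
  independent standard exponential variables: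
  max_exp_cdf n (gumbel_to_max_exp n x) = exp (- exp (- x)).\<close>
definition gumbel_to_max_exp :: "nat \<Rightarrow> real \<Rightarrow> real" where
  "gumbel_to_max_exp n x = - ln (1 - exp (- exp (- x) / real n))"

lemma max_exp_density_nonneg: "0 \<le> max_exp_density n s"
  by (simp add: max_exp_density_def)

lemma borel_measurable_max_exp_density[measurable]: "max_exp_density n \<in> borel_measurable borel"
  unfolding max_exp_density_def by measurable

lemma has_real_derivative_max_exp_cdf:
  "((\<lambda>s. (1 - exp (- s)) ^ n) has_real_derivative real n * exp (- s) * (1 - exp (- s)) ^ (n - 1)) (at s)"
  by (auto intro!: derivative_eq_intros simp: algebra_simps)

lemma borel_measurable_gumbel_to_max_exp[measurable]: "gumbel_to_max_exp n \<in> borel_measurable borel"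
  unfolding gumbel_to_max_exp_def by measurable

lemma gumbel_to_max_exp_pos:
  assumes "0 < n" shows "0 < gumbel_to_max_exp n x"
proof -
  have "exp (- exp (- x) / real n) < 1"
    using assms by simp
  then show ?thesis
    unfolding gumbel_to_max_exp_def by (simp add: ln_less_zero)
qed

lemma gumbel_to_max_exp_le_iff:
  assumes n: "0 < n" and t: "0 < t"
  shows "gumbel_to_max_exp n x \<le> t \<longleftrightarrow> x \<le> - ln (- real n * ln (1 - exp (- t)))"
proof -
  define v where "v = exp (- x) / real n"
  define c where "c = 1 - exp (- t)"
  have v: "0 < v" and c: "0 < c" "c < 1"
    using n t by (auto simp: v_def c_def)
  have pos: "0 < - real n * ln c"
    using n c by (simp add: mult_pos_neg)
  have "gumbel_to_max_exp n x \<le> t \<longleftrightarrow> exp (- t) \<le> 1 - exp (- v)"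
    using v by (subst ln_ge_iff[symmetric]) (auto simp: gumbel_to_max_exp_def v_def)
  also have "\<dots> \<longleftrightarrow> - v \<le> ln c"
    using c by (auto simp: c_def ln_ge_iff)
  also have "\<dots> \<longleftrightarrow> - real n * ln c \<le> exp (- x)"
    using n by (simp add: v_def field_simps, linarith)
  also have "\<dots> \<longleftrightarrow> ln (- real n * ln c) \<le> - x"
    using ln_le_cancel_iff[OF pos exp_gt_zero, of "- x"] by simp
  finally show ?thesis
    by (auto simp: c_def)
qed

lemma emeasure_distr_gumbel_to_max_exp_atMost:
  assumes n: "0 < n"
  shows "emeasure (distr gumbel_law borel (gumbel_to_max_exp n)) {..t} = ennreal (max_exp_cdf n t)"
proof (cases "t \<le> 0")
  case True
  have "t < gumbel_to_max_exp n x" for x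
    using True gumbel_to_max_exp_pos[OF n, of x] by linarith
  then have "gumbel_to_max_exp n -` {..t} = {}"
    by (auto simp flip: not_less)
  then show ?thesis
    using True by (simp add: emeasure_distr max_exp_cdf_def)
next
  case False
  define c where "c = 1 - exp (- t)"
  have c: "0 < c" "c < 1" and n_ln_c: "0 < - real n * ln c"
    using n False by (auto simp: c_def intro!: mult_pos_neg)
  have "exp (- exp (ln (- real n * ln c))) = c ^ n"
    using c n_ln_c by (simp add: exp_of_nat_mult)
  moreover have "gumbel_to_max_exp n -` {..t} = {..- ln (- real n * ln c)}"
    using gumbel_to_max_exp_le_iff[OF n] False by (auto simp: c_def)
  ultimately show ?thesis
    using False by (simp add: emeasure_distr emeasure_gumbel_law_atMost max_exp_cdf_def c_def)
qed

lemma emeasure_max_exp_density_atMost: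
  assumes n: "0 < n"
  shows "emeasure (density lborel (max_exp_density n)) {..t} = ennreal (max_exp_cdf n t)"
proof -
  have "emeasure (density lborel (max_exp_density n)) {..t}
      = (\<integral>\<^sup>+s. ennreal (real n * exp (- s) * (1 - exp (- s)) ^ (n - 1)) * indicator {0..t} s \<partial>lborel)"
    by (auto simp: emeasure_density max_exp_density_def indicator_def intro!: nn_integral_cong)
  also have "\<dots> = ennreal (max_exp_cdf n t)"
  proof (cases "t < 0")
    case False
    then show ?thesis
      using n by (subst nn_integral_FTC_Icc[OF _ has_real_derivative_max_exp_cdf]) (auto simp: max_exp_cdf_def)
  qed (auto simp: max_exp_cdf_def)
  finally show ?thesis .
qed

lemma density_max_exp_eq_distr_gumbel:
  assumes n: "0 < n"
  shows "density lborel (max_exp_density n) = distr gumbel_law borel (gumbel_to_max_exp n)"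
proof (rule cdf_unique)
  show "real_distribution (distr gumbel_law borel (gumbel_to_max_exp n))"
    by (auto intro!: gumbel.prob_space_distr simp: real_distribution_def real_distribution_axioms_def)
  have "((\<lambda>t::real. (1 - exp (- t)) ^ n) \<longlongrightarrow> 1) at_top"
    by real_asymp
  then have "(\<integral>\<^sup>+s. ennreal (real n * exp (- s) * (1 - exp (- s)) ^ (n - 1)) * indicator {0..} s \<partial>lborel)
      = ennreal (1 - (1 - exp (- 0)) ^ n)"
    by (intro nn_integral_FTC_atLeast[OF _ has_real_derivative_max_exp_cdf]) auto
  moreover have "ennreal (max_exp_density n s)
      = ennreal (real n * exp (- s) * (1 - exp (- s)) ^ (n - 1)) * indicator {0..} s" for s
    by (simp add: max_exp_density_def indicator_def)
  ultimately have "emeasure (density lborel (max_exp_density n)) UNIV = 1"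
    using n by (simp add: emeasure_density)
  then show "real_distribution (density lborel (max_exp_density n))"
    using n by (auto intro!: prob_spaceI simp: real_distribution_def real_distribution_axioms_def)
  show "cdf (density lborel (max_exp_density n)) = cdf (distr gumbel_law borel (gumbel_to_max_exp n))"
    using n by (auto simp: cdf_def measure_def emeasure_max_exp_density_atMost
        emeasure_distr_gumbel_to_max_exp_atMost max_exp_cdf_def)
qed

lemma gumbel_to_max_exp_approx:
  assumes n: "0 < n"
  shows "\<bar>gumbel_to_max_exp n x - ln (real n) - x\<bar> \<le> exp (- x) / real n"
proof -
  define v where "v = exp (- x) / real n"
  have v: "0 < v" and d: "0 < 1 - exp (- v)"
    using n by (auto simp: v_def)
  have "ln v = - x - ln (real n)"
    using n by (simp add: v_def ln_div)
  then have "gumbel_to_max_exp n x - ln (real n) - x = ln (v / (1 - exp (- v)))"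
    using v d by (simp add: gumbel_to_max_exp_def v_def[symmetric] ln_div)
  moreover have "0 \<le> ln (v / (1 - exp (- v)))"
    using d exp_ge_add_one_self[of "- v"] by simp
  moreover have "(1 + v) * exp v \<le> exp v * exp v"
    using exp_ge_add_one_self[of v] by (intro mult_right_mono) auto
  then have "ln (v / (1 - exp (- v))) \<le> ln (exp v)"
    using v d by (subst ln_le_cancel_iff) (auto simp: exp_minus field_simps)
  ultimately show ?thesis
    by (simp add: v_def)
qed

lemma integral_max_exp_density_eq_gumbel:
  fixes h :: "real \<Rightarrow> real"
  assumes n: "0 < n" and h[measurable]: "h \<in> borel_measurable borel"
  shows "(\<integral>s. max_exp_density n s * h s \<partial>lborel) = (\<integral>x. h (gumbel_to_max_exp n x) \<partial>gumbel_law)"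
proof -
  have "(\<integral>s. max_exp_density n s * h s \<partial>lborel) = integral\<^sup>L (density lborel (max_exp_density n)) h"
    by (simp add: integral_density max_exp_density_nonneg)
  also have "\<dots> = (\<integral>x. h (gumbel_to_max_exp n x) \<partial>gumbel_law)"
    using n by (simp add: density_max_exp_eq_distr_gumbel integral_distr)
  finally show ?thesis .
qed

lemma integral_max_exp_density_shift_approx:
  fixes g :: "real \<Rightarrow> real"
  assumes n: "0 < n" and g: "1-lipschitz_on UNIV g"
  shows "\<bar>(\<integral>s. max_exp_density n s * g (s - ln (real n)) \<partial>lborel) - integral\<^sup>L gumbel_law g\<bar> \<le> 1 / real n"
proof -
  let ?\<psi> = "\<lambda>x. gumbel_to_max_exp n x - ln (real n)"
  note g_borel[measurable] = borel_measurable_lipschitz_on_UNIV[OF g]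
  have eq: "(\<integral>s. max_exp_density n s * g (s - ln (real n)) \<partial>lborel) = (\<integral>x. g (?\<psi> x) \<partial>gumbel_law)"
    using integral_max_exp_density_eq_gumbel[OF n, of "\<lambda>s. g (s - ln (real n))"] by simp
  have close: "\<bar>g (?\<psi> x) - g x\<bar> \<le> exp (- x) / real n" for x
    using lipschitz_onD[OF g, of "?\<psi> x" x] gumbel_to_max_exp_approx[OF n, of x]
    by (simp add: dist_real_def)
  have int_g: "integrable gumbel_law g"
    by (rule integrable_gumbel_lipschitz[OF g])
  have int_g\<psi>: "integrable gumbel_law (\<lambda>x. g (?\<psi> x))"
  proof (rule Bochner_Integration.integrable_bound)
    show "integrable gumbel_law (\<lambda>x. \<bar>g x\<bar> + exp (- x) / real n)"
      by (intro Bochner_Integration.integrable_add integrable_divide integrable_gumbel_exp_neg integrable_abs int_g)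
    show "AE x in gumbel_law. norm (g (?\<psi> x)) \<le> norm (\<bar>g x\<bar> + exp (- x) / real n)"
    proof (intro AE_I2)
      fix x
      have "\<bar>g (?\<psi> x)\<bar> \<le> \<bar>g x\<bar> + exp (- x) / real n"
        using close[of x] abs_triangle_ineq2[of "g (?\<psi> x)" "g x"] by linarith
      then show "norm (g (?\<psi> x)) \<le> norm (\<bar>g x\<bar> + exp (- x) / real n)"
        by simp
    qed
  qed simp
  have "\<bar>(\<integral>x. g (?\<psi> x) \<partial>gumbel_law) - integral\<^sup>L gumbel_law g\<bar> = \<bar>\<integral>x. g (?\<psi> x) - g x \<partial>gumbel_law\<bar>"
    using int_g int_g\<psi> by simp
  also have "\<dots> \<le> (\<integral>x. exp (- x) / real n \<partial>gumbel_law)"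
    using close
    by (intro order_trans[OF integral_abs_bound] integral_mono integrable_abs Bochner_Integration.integrable_diff
        int_g int_g\<psi> integrable_divide integrable_gumbel_exp_neg)
  also have "\<dots> = 1 / real n"
    using integral_gumbel_exp_neg by simp
  finally show ?thesis
    unfolding eq .
qed

lemma nn_integral_max_exp_density_mean_le:
  assumes n: "0 < n"
  shows "(\<integral>\<^sup>+s. ennreal (max_exp_density n s * s) \<partial>lborel) \<le> ennreal (ln (real n) + 3)"
proof -
  have ln_n: "0 \<le> ln (real n)"
    using n by simp
  have "(\<integral>\<^sup>+s. ennreal (max_exp_density n s * s) \<partial>lborel)
      = (\<integral>\<^sup>+s. ennreal s \<partial>density lborel (max_exp_density n))"
    by (simp add: nn_integral_density ennreal_mult' max_exp_density_nonneg)
  also have "\<dots> = (\<integral>\<^sup>+x. ennreal (gumbel_to_max_exp n x) \<partial>gumbel_law)"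
    using n by (simp add: density_max_exp_eq_distr_gumbel nn_integral_distr)
  also have "\<dots> \<le> (\<integral>\<^sup>+x. ennreal (ln (real n)) + (ennreal \<bar>x\<bar> + ennreal (exp (- x))) \<partial>gumbel_law)"
  proof (rule nn_integral_mono)
    fix x
    have "exp (- x) / real n \<le> exp (- x)"
      using n by (simp add: divide_le_eq)
    then have "gumbel_to_max_exp n x \<le> ln (real n) + (\<bar>x\<bar> + exp (- x))"
      using gumbel_to_max_exp_approx[OF n, of x] by linarith
    then show "ennreal (gumbel_to_max_exp n x) \<le> ennreal (ln (real n)) + (ennreal \<bar>x\<bar> + ennreal (exp (- x)))"
      using ln_n by (simp add: ennreal_leI flip: ennreal_plus)
  qed
  also have "\<dots> = ennreal (ln (real n)) + ((\<integral>\<^sup>+x. ennreal \<bar>x\<bar> \<partial>gumbel_law) + 1)"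
    using gumbel.emeasure_space_1 by (simp add: nn_integral_add nn_integral_gumbel_exp_neg)
  also have "\<dots> \<le> ennreal (ln (real n)) + (2 + 1)"
    using nn_integral_gumbel_abs_le by (intro add_mono order_refl)
  also have "\<dots> = ennreal (ln (real n) + 3)"
    using ln_n by (simp add: ennreal_plus)
  finally show ?thesis .
qed

lemma max_exp_density_alternating_sum:
  assumes n: "0 < n" and s: "0 \<le> s"
  shows "(\<Sum>S\<in>Pow {1..n}. (- 1) ^ (n - card S) * exp (- real n * s) * (real (card S) - real n)
      * exp (real (card S) * s)) = max_exp_density n s"
proof -
  obtain m where n_Suc: "n = Suc m"
    using n gr0_implies_Suc by blast
  have "(\<Sum>S\<in>Pow {1..n}. (- 1) ^ (n - card S) * exp (- real n * s) * (real (card S) - real n)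
      * exp (real (card S) * s))
      = - exp (- real n * s) * (\<Sum>S\<in>Pow {1..n}. (- 1) ^ (n - card S) * (real n - real (card S)) * exp s ^ card S)"
    by (simp add: sum_distrib_left algebra_simps flip: exp_of_nat_mult)
  also have "\<dots> = exp (- real n * s) * real n * (exp s - 1) ^ (n - 1)"
    using sum_Pow_alternating_deriv[of "{1..n}" "exp s"] by simp
  also have "\<dots> = real n * exp (- s) * (exp (- s) * (exp s - 1)) ^ (n - 1)"
  proof -
    have "exp (- real n * s) = exp (- s) * exp (- s) ^ (n - 1)"
      unfolding n_Suc by (simp flip: exp_of_nat_mult exp_add) (simp add: algebra_simps)
    then show ?thesis
      by (simp add: power_mult_distrib)
  qed
  also have "exp (- s) * (exp s - 1) = 1 - exp (- s)"
    by (simp add: exp_minus field_simps)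
  finally show ?thesis
    using s by (simp add: max_exp_density_def)
qed

section \<open>The coupon collector\<close>

lemma (in prob_space) sums_expectation_nat_valued:
  fixes X :: "'a \<Rightarrow> nat" and F :: "nat \<Rightarrow> real"
  assumes X[measurable]: "X \<in> measurable M (count_space UNIV)"
    and summable: "summable (\<lambda>j. \<bar>F j\<bar> * prob {\<omega> \<in> space M. X \<omega> = j})"
  shows "(\<lambda>j. F j * prob {\<omega> \<in> space M. X \<omega> = j}) sums expectation (\<lambda>\<omega>. F (X \<omega>))"
proof -
  define g where "g j \<omega> = F j * indicator {\<omega> \<in> space M. X \<omega> = j} \<omega>" for j \<omega>
  have g_single: "g j \<omega> = (if j = X \<omega> then F j else 0)" if "\<omega> \<in> space M" for j \<omega>
    using that by (auto simp: g_def)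
  have "(\<lambda>j. integral\<^sup>L M (g j)) sums (\<integral>\<omega>. (\<Sum>j. g j \<omega>) \<partial>M)"
  proof (rule sums_integral)
    show "integrable M (g j)" for j
      unfolding g_def by (intro integrable_mult_right integrable_real_indicator) (auto simp flip: less_top)
    show "AE \<omega> in M. summable (\<lambda>j. norm (g j \<omega>))"
    proof (rule AE_I2)
      fix \<omega> assume "\<omega> \<in> space M"
      then have "(\<lambda>j. norm (g j \<omega>)) = (\<lambda>j. if j = X \<omega> then \<bar>F j\<bar> else 0)"
        by (auto simp: g_single)
      then show "summable (\<lambda>j. norm (g j \<omega>))"
        using sums_single[of "X \<omega>" "\<lambda>j. \<bar>F j\<bar>"] by (simp add: sums_iff)
    qed
    show "summable (\<lambda>j. \<integral>\<omega>. norm (g j \<omega>) \<partial>M)"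
      using summable by (simp add: g_def abs_mult)
  qed
  moreover have "(\<Sum>j. g j \<omega>) = F (X \<omega>)" if "\<omega> \<in> space M" for \<omega>
    using sums_single[of "X \<omega>" F] that by (simp add: g_single sums_iff)
  ultimately show ?thesis
    by (simp add: g_def cong: Bochner_Integration.integral_cong)
qed

lemma Least_eq_iff_mono:
  fixes P :: "nat \<Rightarrow> bool"
  assumes mono: "\<And>i j. i \<le> j \<Longrightarrow> P i \<Longrightarrow> P j" and not0: "\<not> P 0" and ex: "\<exists>k. P k"
  shows "(LEAST k. P k) = j \<longleftrightarrow> P j \<and> \<not> P (j - 1)"
proof
  assume j: "(LEAST k. P k) = j"
  then have "P j"
    using LeastI_ex[OF ex] by simp
  moreover have "\<not> P (j - 1)"
  proof
    assume "P (j - 1)"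
    then have "j \<le> j - 1"
      using Least_le[of P "j - 1"] j by simp
    then show False
      using \<open>P j\<close> not0 by (cases j) auto
  qed
  ultimately show "P j \<and> \<not> P (j - 1)" ..
next
  assume j: "P j \<and> \<not> P (j - 1)"
  show "(LEAST k. P k) = j"
  proof (rule Least_equality)
    show "j \<le> y" if "P y" for y
      using mono[of y "j - 1"] that j by (cases "j \<le> y") auto
  qed (use j in simp)
qed

locale coupon_collector =
  fixes n :: nat
  assumes n_pos: "0 < n"
begin

sublocale prob_space "coupon_space n"
  unfolding coupon_space_def by (rule prob_space.prob_space_stream_space[OF prob_space_measure_pmf])

definition covered :: "nat \<Rightarrow> nat stream \<Rightarrow> bool" where
  "covered m w \<longleftrightarrow> set (stake m w) = {1..n}"

definition cover_prob :: "nat \<Rightarrow> real" where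
  "cover_prob m = (\<Sum>S\<in>Pow {1..n}. (- 1) ^ (n - card S) * (real (card S) / real n) ^ m)"

definition time_prob :: "nat \<Rightarrow> real" where
  "time_prob j = prob {w \<in> space (coupon_space n). coupon_time n w = j}"

lemma measurable_covered[measurable]: "Measurable.pred (coupon_space n) (covered m)"
  unfolding covered_def[abs_def] coupon_space_def by measurable

lemma measurable_coupon_time[measurable]: "coupon_time n \<in> measurable (coupon_space n) (count_space UNIV)"
  unfolding coupon_time_def[abs_def] coupon_space_def by measurable

lemma time_prob_nonneg: "0 \<le> time_prob j"
  by (simp add: time_prob_def)

lemma prob_covered: "prob {w \<in> space (coupon_space n). covered m w} = cover_prob m"
proof -
  have "{xs. length xs = m \<and> set xs \<subseteq> {1..n} \<and> set xs = {1..n}} = {xs. length xs = m \<and> set xs = {1..n}}"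
    by auto
  then have "prob {w \<in> space (coupon_space n). covered m w}
      = real (card {xs. length xs = m \<and> set xs = {1..n}}) / real n ^ m"
    unfolding coupon_space_def covered_def using n_pos by (subst measure_stream_space_pmf_of_set_stake) auto
  then show ?thesis
    by (simp add: card_lists_set_eq_inclusion_exclusion cover_prob_def sum_divide_distrib power_divide)
qed

lemma AE_coupons: "AE w in coupon_space n. \<forall>i. w !! i \<in> {1..n}"
proof -
  have coupons: "set_pmf (pmf_of_set {1..n}) = {1..n}"
    using n_pos by (intro set_pmf_of_set) auto
  have "AE w in coupon_space n. stream_all (\<lambda>x. x \<in> {1..n}) w"
    unfolding coupon_space_def
    by (rule prob_space.AE_stream_all[OF prob_space_measure_pmf]) (use coupons in \<open>simp_all add: AE_measure_pmf_iff\<close>)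
  then show ?thesis
    by (rule eventually_mono) (simp add: stream_all_def sset_range)
qed

lemma not_covered_0: "\<not> covered 0 w"
  using n_pos by (simp add: covered_def)

lemma covered_mono:
  assumes coupons: "\<forall>i. w !! i \<in> {1..n}" and "i \<le> j" and "covered i w"
  shows "covered j w"
proof -
  obtain k where j: "j = i + k"
    using \<open>i \<le> j\<close> le_Suc_ex by blast
  have "stake j w = stake i w @ stake k (sdrop i w)"
    by (simp add: j)
  then have "set (stake i w) \<subseteq> set (stake j w)"
    by (simp del: stake_add)
  moreover have "set (stake j w) \<subseteq> {1..n}"
    using coupons by (auto simp: in_set_conv_nth)
  ultimately show ?thesis
    using \<open>covered i w\<close> by (auto simp: covered_def)
qed

lemma cover_prob_tendsto: "cover_prob \<longlonglongrightarrow> 1"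
proof -
  have "(\<lambda>m. \<Sum>S\<in>Pow {1..n}. (- 1) ^ (n - card S) * (real (card S) / real n) ^ m)
      \<longlonglongrightarrow> (\<Sum>S\<in>Pow {1..n}. if S = {1..n} then 1 else 0)"
  proof (intro tendsto_sum)
    fix S assume S: "S \<in> Pow {1..n}"
    show "(\<lambda>m. (- 1) ^ (n - card S) * (real (card S) / real n) ^ m) \<longlonglongrightarrow> (if S = {1..n} then 1 else 0)"
    proof (cases "S = {1..n}")
      case False
      then have "card S < n"
        using S psubset_card_mono[of "{1..n}" S] by auto
      then have "(\<lambda>m. (real (card S) / real n) ^ m) \<longlonglongrightarrow> 0"
        by (intro LIMSEQ_power_zero) auto
      then show ?thesis
        using False by (auto intro: tendsto_mult_right_zero)
    qed (use n_pos in simp)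
  qed
  then show ?thesis
    by (simp add: cover_prob_def[abs_def])
qed

lemma AE_eventually_covered: "AE w in coupon_space n. \<exists>k. covered k w"
proof -
  let ?N = "{w \<in> space (coupon_space n). \<not> (\<exists>k. covered k w)}"
  have "prob ?N \<le> 1 - cover_prob k" for k
  proof -
    have "prob ?N \<le> prob (space (coupon_space n) - {w \<in> space (coupon_space n). covered k w})"
      by (intro finite_measure_mono) auto
    also have "\<dots> = 1 - cover_prob k"
      by (subst prob_compl) (auto simp: prob_covered)
    finally show ?thesis .
  qed
  then have "prob ?N \<le> 1 - 1"
    by (intro LIMSEQ_le_const[OF tendsto_diff[OF tendsto_const cover_prob_tendsto]]) auto
  then have "prob ?N = 0"
    using measure_nonneg[of "coupon_space n" ?N] by linarith
  then show ?thesis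
    by (subst AE_iff_measurable[OF _ refl]) (auto simp: emeasure_eq_measure)
qed

lemma AE_coupon_time_eq_iff:
  "AE w in coupon_space n. coupon_time n w = j \<longleftrightarrow> covered j w \<and> \<not> covered (j - 1) w"
  using AE_coupons AE_eventually_covered
proof eventually_elim
  case (elim w)
  have "1 \<le> k \<and> covered k w \<longleftrightarrow> covered k w" for k
    using not_covered_0[of w] by (cases k) auto
  then have "coupon_time n w = (LEAST k. covered k w)"
    unfolding coupon_time_def covered_def[symmetric] by simp
  then show ?case
    using Least_eq_iff_mono[of "\<lambda>k. covered k w"] covered_mono[OF elim(1)] not_covered_0 elim(2) by simp
qed

lemma time_prob_0: "time_prob 0 = 0"
proof -
  have "time_prob 0 = prob {}"
    unfolding time_prob_def
    by (rule measure_eq_AE) (use AE_coupon_time_eq_iff[of 0] not_covered_0 in \<open>auto elim!: eventually_mono\<close>)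
  then show ?thesis
    by simp
qed

lemma time_prob_Suc: "time_prob (Suc j) = cover_prob (Suc j) - cover_prob j"
proof -
  let ?C = "\<lambda>m. {w \<in> space (coupon_space n). covered m w}"
  have "time_prob (Suc j) = prob (?C (Suc j) - ?C j)"
    unfolding time_prob_def
    by (rule measure_eq_AE) (use AE_coupon_time_eq_iff[of "Suc j"] in \<open>auto elim!: eventually_mono\<close>)
  also have "\<dots> = prob (?C (Suc j)) - prob (?C (Suc j) \<inter> ?C j)"
    by (rule finite_measure_Diff') auto
  also have "prob (?C (Suc j) \<inter> ?C j) = prob (?C j)"
    by (rule measure_eq_AE) (use AE_coupons in \<open>auto elim!: eventually_mono intro: covered_mono[of _ j "Suc j"]\<close>)
  finally show ?thesis
    by (simp add: prob_covered)
qed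

lemma time_prob_Suc_mult_erlang_density:
  assumes s: "0 \<le> s"
  shows "time_prob (Suc j) * erlang_density j (real n) s
    = (\<Sum>S\<in>Pow {1..n}. (- 1) ^ (n - card S) * exp (- real n * s) * (real (card S) - real n)
        * ((real (card S) * s) ^ j / fact j))"
proof -
  have summand: "((c / real n) ^ Suc j - (c / real n) ^ j) * (real n ^ Suc j * (s ^ j * exp (- real n * s)) / fact j)
      = exp (- real n * s) * ((c - real n) * ((c * s) ^ j / fact j))" for c
  proof -
    have "(c / real n) ^ j * real n ^ j = c ^ j"
      using n_pos by (simp add: power_divide)
    then show ?thesis
      using n_pos by (simp add: field_simps power_mult_distrib)
  qed
  have "time_prob (Suc j) * erlang_density j (real n) s
      = (\<Sum>S\<in>Pow {1..n}. (- 1) ^ (n - card S) * (((real (card S) / real n) ^ Suc j - (real (card S) / real n) ^ j)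
          * (real n ^ Suc j * (s ^ j * exp (- real n * s)) / fact j)))"
    unfolding time_prob_Suc cover_prob_def sum_subtractf[symmetric] right_diff_distrib[symmetric] sum_distrib_right
    using s by (intro sum.cong refl) (simp add: erlang_density_def)
  also have "\<dots> = (\<Sum>S\<in>Pow {1..n}. (- 1) ^ (n - card S) * exp (- real n * s) * (real (card S) - real n)
        * ((real (card S) * s) ^ j / fact j))"
    by (intro sum.cong refl) (simp only: summand mult.assoc)
  finally show ?thesis .
qed

lemma time_prob_erlang_sums:
  assumes s: "0 \<le> s"
  shows "(\<lambda>j. time_prob (Suc j) * erlang_density j (real n) s) sums max_exp_density n s"
proof -
  have "(\<lambda>j. x ^ j / fact j) sums exp x" for x :: real
    using exp_converges[of x] by (simp add: divide_inverse mult.commute)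
  then have "(\<lambda>j. \<Sum>S\<in>Pow {1..n}. (- 1) ^ (n - card S) * exp (- real n * s) * (real (card S) - real n)
        * ((real (card S) * s) ^ j / fact j))
      sums (\<Sum>S\<in>Pow {1..n}. (- 1) ^ (n - card S) * exp (- real n * s) * (real (card S) - real n)
        * exp (real (card S) * s))"
    by (intro sums_sum sums_mult)
  then show ?thesis
    unfolding time_prob_Suc_mult_erlang_density[OF s] max_exp_density_alternating_sum[OF n_pos s, symmetric] .
qed

lemma nn_integral_max_exp_density_mean:
  "(\<integral>\<^sup>+s. ennreal (max_exp_density n s * s) \<partial>lborel)
    = (\<Sum>j. ennreal (time_prob (Suc j) * real (Suc j) / real n))"
proof -
  have "ennreal (max_exp_density n s * s) = (\<Sum>j. ennreal (time_prob (Suc j) * erlang_density j (real n) s * s))" for s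
  proof (cases "s < 0")
    case False
    then have sums: "(\<lambda>j. time_prob (Suc j) * erlang_density j (real n) s * s) sums (max_exp_density n s * s)"
      using sums_mult2[OF time_prob_erlang_sums] by simp
    have "0 \<le> time_prob (Suc j) * erlang_density j (real n) s * s" for j
      using False n_pos by (simp add: time_prob_nonneg)
    then show ?thesis
      using sums by (simp add: suminf_ennreal2 sums_summable sums_unique[symmetric])
  qed (simp add: max_exp_density_def erlang_density_def)
  then have "(\<integral>\<^sup>+s. ennreal (max_exp_density n s * s) \<partial>lborel)
      = (\<Sum>j. \<integral>\<^sup>+s. ennreal (time_prob (Suc j)) * ennreal (erlang_density j (real n) s * s ^ 1) \<partial>lborel)"
    by (simp add: nn_integral_suminf time_prob_nonneg mult.assoc flip: ennreal_mult')
  also have "\<dots> = (\<Sum>j. ennreal (time_prob (Suc j) * real (Suc j) / real n))"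
  proof (rule suminf_cong)
    fix j
    have "(\<integral>\<^sup>+s. ennreal (time_prob (Suc j)) * ennreal (erlang_density j (real n) s * s ^ 1) \<partial>lborel)
        = ennreal (time_prob (Suc j)) * (\<integral>\<^sup>+s. ennreal (erlang_density j (real n) s * s ^ 1) \<partial>lborel)"
      by (rule nn_integral_cmult) simp
    also have "\<dots> = ennreal (time_prob (Suc j)) * ennreal (fact (j + 1) / (fact j * real n ^ 1))"
      using n_pos by (simp only: nn_integral_erlang_ith_moment of_nat_0_less_iff)
    also have "\<dots> = ennreal (time_prob (Suc j) * (fact (j + 1) / (fact j * real n ^ 1)))"
      by (rule ennreal_mult'[symmetric, OF time_prob_nonneg])
    also have "fact (j + 1) / (fact j * real n ^ 1) = real (Suc j) / real n"
      by (simp add: fact_Suc del: of_nat_Suc)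
    finally show "(\<integral>\<^sup>+s. ennreal (time_prob (Suc j)) * ennreal (erlang_density j (real n) s * s ^ 1) \<partial>lborel)
        = ennreal (time_prob (Suc j) * real (Suc j) / real n)"
      by simp
  qed
  finally show ?thesis .
qed

lemma summable_time_prob_mean: "summable (\<lambda>j. time_prob (Suc j) * real (Suc j) / real n)"
  and time_prob_mean_le: "(\<Sum>j. time_prob (Suc j) * real (Suc j) / real n) \<le> ln (real n) + 3"
proof -
  have nonneg: "0 \<le> time_prob (Suc j) * real (Suc j) / real n" for j
    by (simp add: time_prob_nonneg)
  have le: "(\<Sum>j. ennreal (time_prob (Suc j) * real (Suc j) / real n)) \<le> ennreal (ln (real n) + 3)"
    using nn_integral_max_exp_density_mean_le[OF n_pos] by (simp add: nn_integral_max_exp_density_mean)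
  then show summable: "summable (\<lambda>j. time_prob (Suc j) * real (Suc j) / real n)"
    by (intro summable_suminf_not_top nonneg) (auto simp: top_unique)
  have "0 \<le> ln (real n) + 3"
    using n_pos by simp
  then show "(\<Sum>j. time_prob (Suc j) * real (Suc j) / real n) \<le> ln (real n) + 3"
    using le unfolding suminf_ennreal2[OF nonneg summable] by simp
qed

lemma summable_time_prob_affine: "summable (\<lambda>j. time_prob (Suc j) * (a + b * real (Suc j)))"
proof -
  have "summable (\<lambda>j. time_prob (Suc j) * real (Suc j))"
    using summable_mult[OF summable_time_prob_mean, of "real n"] n_pos by simp
  moreover have "summable (\<lambda>j. time_prob (Suc j))"
  proof (rule summable_comparison_test'[OF \<open>summable (\<lambda>j. time_prob (Suc j) * real (Suc j))\<close>, of 0])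
    show "norm (time_prob (Suc j)) \<le> time_prob (Suc j) * real (Suc j)" for j
      using mult_left_mono[of 1 "real (Suc j)" "time_prob (Suc j)"] by (simp add: time_prob_nonneg)
  qed
  ultimately have "summable (\<lambda>j. a * time_prob (Suc j) + b * (time_prob (Suc j) * real (Suc j)))"
    by (intro summable_add summable_mult)
  then show ?thesis
    by (simp add: algebra_simps)
qed

lemma sums_integral_Zn_law:
  fixes g :: "real \<Rightarrow> real"
  assumes g: "1-lipschitz_on UNIV g"
  shows "(\<lambda>j. time_prob (Suc j) * g (real (Suc j) / real n - ln (real n))) sums integral\<^sup>L (Zn_law n) g"
proof -
  define F where "F j = g (real j / real n - ln (real n))" for j
  note g_borel[measurable] = borel_measurable_lipschitz_on_UNIV[OF g]
  have "summable (\<lambda>j. \<bar>F (Suc j)\<bar> * time_prob (Suc j))"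
  proof (rule summable_comparison_test'[OF summable_time_prob_affine, of 0])
    show "norm (\<bar>F (Suc j)\<bar> * time_prob (Suc j))
        \<le> time_prob (Suc j) * (\<bar>g (- ln (real n))\<bar> + 1 / real n * real (Suc j))" for j
      using abs_le_abs_add_lipschitz[OF g, of "real (Suc j) / real n - ln (real n)" "- ln (real n)"]
      by (simp add: F_def abs_mult time_prob_nonneg mult.commute mult_left_mono)
  qed
  then have "summable (\<lambda>j. \<bar>F j\<bar> * time_prob j)"
    using summable_Suc_iff[of "\<lambda>j. \<bar>F j\<bar> * time_prob j"] by simp
  then have "(\<lambda>j. F j * time_prob j) sums expectation (\<lambda>w. F (coupon_time n w))"
    unfolding time_prob_def by (intro sums_expectation_nat_valued) simp_all
  moreover have "expectation (\<lambda>w. F (coupon_time n w)) = integral\<^sup>L (Zn_law n) g"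
    by (simp add: Zn_law_def F_def integral_distr)
  ultimately show ?thesis
    by (subst sums_Suc_iff) (simp add: F_def time_prob_0 mult.commute)
qed

lemma erlang_mixture_sums:
  fixes g :: "real \<Rightarrow> real"
  assumes g: "1-lipschitz_on UNIV g"
  shows "(\<lambda>j. time_prob (Suc j) * (\<integral>s. erlang_density j (real n) s * g s \<partial>lborel))
    sums (\<integral>s. max_exp_density n s * g s \<partial>lborel)"
proof -
  define G where "G j s = time_prob (Suc j) * (erlang_density j (real n) s * g s)" for j s
  note erlang = erlang_lipschitz_integrable[of "real n" g, OF _ g]
  have "(\<lambda>j. integral\<^sup>L lborel (G j)) sums (\<integral>s. (\<Sum>j. G j s) \<partial>lborel)"
  proof (rule sums_integral)
    show "integrable lborel (G j)" for j
      unfolding G_def using n_pos by (intro integrable_mult_right erlang) simp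
    show "AE s in lborel. summable (\<lambda>j. norm (G j s))"
    proof (rule AE_I2)
      fix s :: real
      show "summable (\<lambda>j. norm (G j s))"
      proof (cases "s < 0")
        case False
        then have "summable (\<lambda>j. time_prob (Suc j) * erlang_density j (real n) s * \<bar>g s\<bar>)"
          by (intro summable_mult2 sums_summable[OF time_prob_erlang_sums]) simp
        then show ?thesis
          by (simp add: G_def abs_mult time_prob_nonneg mult.assoc)
      qed (simp add: G_def erlang_density_def)
    qed
    show "summable (\<lambda>j. \<integral>s. norm (G j s) \<partial>lborel)"
    proof (rule summable_comparison_test'[OF summable_time_prob_affine, of 0])
      show "norm (\<integral>s. norm (G j s) \<partial>lborel) \<le> time_prob (Suc j) * (\<bar>g 0\<bar> + 1 / real n * real (Suc j))" for j
        using erlang(2)[of j] n_pos time_prob_nonneg[of "Suc j"]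
        by (simp add: G_def abs_mult mult_left_mono)
    qed
  qed
  moreover have "(\<Sum>j. G j s) = max_exp_density n s * g s" for s
  proof (cases "s < 0")
    case False
    then show ?thesis
      using sums_mult2[OF time_prob_erlang_sums, of s "g s"] by (simp add: G_def sums_iff mult.assoc)
  qed (simp add: G_def erlang_density_def max_exp_density_def)
  ultimately show ?thesis
    by (simp add: G_def[abs_def])
qed

lemma Zn_law_integral_minus_gumbel_le:
  fixes f f' :: "real \<Rightarrow> real"
  assumes f: "1-lipschitz_on UNIV f" and der: "\<And>x. (f has_real_derivative f' x) (at x)"
    and f': "1-lipschitz_on UNIV f'"
  shows "integral\<^sup>L (Zn_law n) f - integral\<^sup>L gumbel_law f \<le> (ln (real n) + 5) / (2 * real n)"
proof -
  let ?L = "ln (real n)"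
  define a where "a j = time_prob (Suc j) * f (real (Suc j) / real n - ?L)" for j
  define b where "b j = time_prob (Suc j) * (\<integral>s. erlang_density j (real n) s * f (s - ?L) \<partial>lborel)" for j
  have a: "a sums integral\<^sup>L (Zn_law n) f"
    unfolding a_def by (rule sums_integral_Zn_law[OF f])
  have b: "b sums (\<integral>s. max_exp_density n s * f (s - ?L) \<partial>lborel)"
    unfolding b_def by (rule erlang_mixture_sums[OF lipschitz_on_UNIV_shift[OF f]])
  have "a j - b j \<le> time_prob (Suc j) * real (Suc j) / real n / (2 * real n)" (is "_ \<le> ?c j") for j
  proof -
    have "((\<lambda>s. f (s - ?L)) has_real_derivative f' (s - ?L) * 1) (at s)" for s
      by (rule DERIV_chain2[OF der]) (auto intro!: derivative_eq_intros)
    then have "\<bar>(\<integral>s. erlang_density j (real n) s * f (s - ?L) \<partial>lborel) - f (real (Suc j) / real n - ?L)\<bar>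
        \<le> 1 * real (Suc j) / (2 * (real n)\<^sup>2)"
      using n_pos by (intro erlang_taylor_approx[OF _ _ lipschitz_on_UNIV_shift[OF f']]) auto
    then show ?thesis
      using time_prob_nonneg[of "Suc j"] mult_left_mono
      by (fastforce simp: a_def b_def power2_eq_square abs_le_iff right_diff_distrib[symmetric])
  qed
  then have "(\<Sum>j. a j - b j) \<le> (\<Sum>j. ?c j)"
    using sums_summable[OF a] sums_summable[OF b]
    by (intro suminf_le summable_diff summable_divide summable_time_prob_mean)
  also have "\<dots> = (\<Sum>j. time_prob (Suc j) * real (Suc j) / real n) / (2 * real n)"
    by (rule suminf_divide[OF summable_time_prob_mean])
  also have "\<dots> \<le> (?L + 3) / (2 * real n)"
    using n_pos by (intro divide_right_mono time_prob_mean_le) auto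
  finally have "integral\<^sup>L (Zn_law n) f - (\<integral>s. max_exp_density n s * f (s - ?L) \<partial>lborel) \<le> (?L + 3) / (2 * real n)"
    using sums_unique[OF sums_diff[OF a b]] by simp
  moreover have "(\<integral>s. max_exp_density n s * f (s - ?L) \<partial>lborel) - integral\<^sup>L gumbel_law f \<le> 1 / real n"
    using integral_max_exp_density_shift_approx[OF n_pos f] by linarith
  ultimately show ?thesis
    using n_pos by (simp add: field_simps)
qed

end

section \<open>The unit sphere of Lip_[2]\<close>

text \<open>Without a Lipschitz bound the set in lip_seminorm is unbounded and its Sup is junk.\<close>
lemma lipschitz_on_lip_seminorm:
  fixes h :: "real \<Rightarrow> real"
  assumes "C-lipschitz_on UNIV h" and le: "lip_seminorm h \<le> K"
  shows "K-lipschitz_on UNIV h"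
proof -
  let ?Q = "{\<bar>h t - h s\<bar> / \<bar>t - s\<bar> | t s. t \<noteq> s}"
  have bdd: "bdd_above ?Q"
  proof (rule bdd_aboveI)
    fix r assume "r \<in> ?Q"
    then obtain t s where r: "r = \<bar>h t - h s\<bar> / \<bar>t - s\<bar>" and "t \<noteq> s"
      by blast
    then show "r \<le> C"
      using lipschitz_onD[OF assms(1), of t s] by (simp add: dist_real_def divide_le_eq)
  qed
  have quotient_le: "\<bar>h t - h s\<bar> / \<bar>t - s\<bar> \<le> K" if "t \<noteq> s" for t s
  proof -
    have "\<bar>h t - h s\<bar> / \<bar>t - s\<bar> \<le> Sup ?Q"
      by (rule cSup_upper[OF _ bdd]) (use that in blast)
    then show ?thesis
      using le by (simp add: lip_seminorm_def)
  qed
  show ?thesis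
  proof (rule lipschitz_onI)
    show "dist (h t) (h s) \<le> K * dist t s" for t s
      using quotient_le[of t s] by (cases "t = s") (simp_all add: dist_real_def divide_le_eq)
    show "0 \<le> K"
      by (rule order_trans[OF _ quotient_le[of 1 0]]) simp_all
  qed
qed

lemma Lip2_norm_eq_1_lipschitz:
  assumes "f \<in> Lip2" and "Lip2_norm f = 1"
  obtains f' where "1-lipschitz_on UNIV f" and "\<And>x. (f has_real_derivative f' x) (at x)"
    and "1-lipschitz_on UNIV f'"
proof -
  obtain C C' f' where f: "C-lipschitz_on UNIV f" and der: "\<And>x. (f has_real_derivative f' x) (at x)"
    and f': "C'-lipschitz_on UNIV f'"
    using assms(1) by (auto simp: Lip2_def)
  have "deriv f = f'"
    using der by (intro ext DERIV_imp_deriv)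
  then have "lip_seminorm f \<le> 1" and "lip_seminorm f' \<le> 1"
    using assms(2) by (auto simp: Lip2_norm_def max_def split: if_splits)
  then show ?thesis
    using that lipschitz_on_lip_seminorm f f' der by blast
qed

theorem theorem3p1:
  shows "\<exists>C>0. \<forall>n::nat. n \<ge> 2 \<longrightarrow>
           dist_Lip2 (Zn_law n) gumbel_law \<le> ereal (C * ln (real n) / real n)"
proof (intro exI[of _ 10] conjI allI impI)
  fix n :: nat
  assume n: "n \<ge> 2"
  interpret coupon_collector n
    using n by unfold_locales simp
  have "1 / 2 \<le> ln (2 :: real)"
    using ln_le_minus_one[of "1 / 2"] by (simp add: ln_div)
  also have "\<dots> \<le> ln (real n)"
    using n by simp
  finally have "(ln (real n) + 5) / (2 * real n) \<le> 10 * ln (real n) / real n"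
    using n by (simp add: field_simps)
  moreover have "integral\<^sup>L (Zn_law n) f - integral\<^sup>L gumbel_law f \<le> (ln (real n) + 5) / (2 * real n)"
    if "f \<in> Lip2" and "Lip2_norm f = 1" for f
    using Lip2_norm_eq_1_lipschitz[OF that] Zn_law_integral_minus_gumbel_le by metis
  ultimately show "dist_Lip2 (Zn_law n) gumbel_law \<le> ereal (10 * ln (real n) / real n)"
    unfolding dist_Lip2_def by (intro SUP_least) force
qed simp

end
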